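(* Let $\mathcal{S}=\{S_1,\dots,S_N\}\subset\mathbb{R}^Q_{\ge 0}$ be a finite set of service vectors, let $\Delta$ be a $Q\times Q$ diagonal matrix with strictly positive diagonal entries, and consider the discrete-time parallel queueing system described in the context, operated under the MaxWeight policy with matrix $\Delta$, with arrivals having long-run rate vector $\rho$. Suppose the system is overloaded, i.e. $\rho\notin\mathcal{P}$. Then $$\lim_{t\to\infty}\frac{X(t)}{t}=\eta\neq 0,$$ that is, the workload grows along the same non-zero vector $\eta$ on every arrival trace (with rate vector $\rho$). Moreover, $\eta$ is the unique solution of the convex program $$\langle \eta,\Delta\eta\rangle=\min_{\eta'\in\Psi(\rho,\mathcal{S})}\langle \eta',\Delta\eta'\rangle,\qquad \Psi(\rho,\mathcal{S})=\Big\{(\rho-r)^+ : r=\sum_{S\in\mathcal{S}}\alpha_S S,\ \alpha_S\ge 0,\ \sum_{S\in\mathcal{S}}\alpha_S\le 1\Big\}.$$ Equivalently, $\eta$ is the unique vector satisfying $\eta=\big(\rho-\sum_{S\in\mathcal{S}}\alpha_S S\big)^+$ for some $\alpha_S\ge 0$ with $\sum_{S\in\mathcal{S}}\alpha_S=1$ such that $\alpha_{S_m}>0$ implies $\langle \eta,\Delta S_m\rangle\ge\langle\eta,\Delta S_k\rangle$ for all $k$.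
   Context: Model: $Q$ queues indexed $q\in\{1,\dots,Q\}$, discrete time $t=0,1,2,\dots$. Arrivals: $A(t)=(A_1(t),\dots,A_Q(t))$ with $0\le A_q(t)\le \bar A_q$ for finite constants $\bar A_q$, and for each $q$ the limit $\rho_q=\lim_{t\to\infty}\frac1t\sum_{s=0}^{t-1}A_q(s)$ exists and lies in $(0,\infty)$; $\rho=(\rho_1,\dots,\rho_Q)$. In each slot a service vector $S(t)\in\mathcal{S}$ is chosen; departures are $D_q(t)=\min\{S_q(t),X_q(t)\}$, and the workload evolves as $X(t+1)=X(t)+A(t)-D(t)$ with $X(0)=0$. MaxWeight policy with matrix $\Delta$: at each $t$, $S(t)\in\arg\max_{S\in\mathcal{S}}\langle S,\Delta X(t)\rangle$ (ties broken arbitrarily). $\langle x,y\rangle=\sum_q x_qy_q$, and $(x)^+$ is the componentwise positive part. Stability region: $\mathcal{P}=\{r\in\mathbb{R}^Q_{\ge0}: r\le\sum_{n=1}^N\alpha_nS_n \text{ componentwise for some }\alpha_n\ge0,\ \sum_n\alpha_n=1\}$. *)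

theory Defs
  imports "HOL-Analysis.Analysis"
begin

text \<open>Vectors in R^Q are modelled as real^'q for a finite index type 'q (Q = CARD('q)).\<close>

definition pos_part :: "real^'q \<Rightarrow> real^'q" where
  "pos_part x = (\<chi> q. max 0 (x $ q))"

definition cmin :: "real^'q \<Rightarrow> real^'q \<Rightarrow> real^'q" where
  "cmin x y = (\<chi> q. min (x $ q) (y $ q))"

definition is_diag_pos :: "real^'q^'q \<Rightarrow> bool" where
  "is_diag_pos D \<longleftrightarrow> (\<forall>i j. i \<noteq> j \<longrightarrow> D $ i $ j = 0) \<and> (\<forall>i. D $ i $ i > 0)"

fun workload :: "(nat \<Rightarrow> real^'q) \<Rightarrow> (nat \<Rightarrow> real^'q) \<Rightarrow> nat \<Rightarrow> real^'q" where
  "workload A S 0 = 0"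
| "workload A S (Suc t) = workload A S t + A t - cmin (S t) (workload A S t)"

definition maxweight :: "(real^'q) set \<Rightarrow> real^'q^'q \<Rightarrow> (nat \<Rightarrow> real^'q) \<Rightarrow> (nat \<Rightarrow> real^'q) \<Rightarrow> bool" where
  "maxweight SS D A S \<longleftrightarrow> (\<forall>t. S t \<in> SS \<and>
     (\<forall>S'\<in>SS. S' \<bullet> (D *v workload A S t) \<le> S t \<bullet> (D *v workload A S t)))"

definition arrival_trace :: "(nat \<Rightarrow> real^'q) \<Rightarrow> real^'q \<Rightarrow> bool" where
  "arrival_trace A rho \<longleftrightarrow>
     (\<exists>Abar. \<forall>t q. 0 \<le> A t $ q \<and> A t $ q \<le> Abar $ q) \<and>
     (\<forall>q. (\<lambda>t. (\<Sum>s<t. A s $ q) / real t) \<longlonglongrightarrow> rho $ q)"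

definition stab_region :: "(real^'q) set \<Rightarrow> (real^'q) set" where
  "stab_region SS = {r. (\<forall>q. 0 \<le> r $ q) \<and>
     (\<exists>\<alpha>. (\<forall>S\<in>SS. 0 \<le> \<alpha> S) \<and> (\<Sum>S\<in>SS. \<alpha> S) = 1 \<and>
          (\<forall>q. r $ q \<le> (\<Sum>S\<in>SS. \<alpha> S *\<^sub>R S) $ q))}"

definition Psi :: "real^'q \<Rightarrow> (real^'q) set \<Rightarrow> (real^'q) set" where
  "Psi rho SS = {pos_part (rho - (\<Sum>S\<in>SS. \<alpha> S *\<^sub>R S)) | \<alpha>.
      (\<forall>S\<in>SS. 0 \<le> \<alpha> S) \<and> (\<Sum>S\<in>SS. \<alpha> S) \<le> 1}"

end

theory Submission
  imports Defs
begin

(* The limit is the unique KKT point eta of minimising <y, Delta y> over Psi.  It exists because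
   a minimiser r of <(rho - r)+, Delta (rho - r)+> over the convex hull of the service vectors
   satisfies the first-order condition <(rho - r)+, Delta (S - r)> <= 0, and the three-point
   inequality <eta, Delta eta> + <y - eta, Delta (y - eta)> <= <y, Delta y> for y in Psi gives both
   minimality and uniqueness.

   For the fluid limit put Y(t) = X(t) - t eta.  MaxWeight together with the KKT conditions bounds
   the increase of <Y, Delta Y> in one slot by 2 <Y(t), Delta (A(t) - rho)> plus a constant.  As Y
   has bounded increments and A - rho has vanishing Cesaro means, summation by parts makes the
   accumulated cross terms o(t^2); hence <Y(t), Delta Y(t)> = o(t^2) and X(t)/t tends to eta. *)

lemma is_diag_pos_mult_vec_nth:
  assumes "is_diag_pos D" shows "(D *v x) $ i = D $ i $ i * x $ i"
proof -
  have "(D *v x) $ i = (\<Sum>j\<in>UNIV. D $ i $ j * x $ j)"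
    by (simp add: matrix_vector_mult_def)
  also have "\<dots> = (\<Sum>j\<in>UNIV. if j = i then D $ i $ i * x $ i else 0)"
    by (rule sum.cong) (use assms in \<open>auto simp: is_diag_pos_def\<close>)
  finally show ?thesis by simp
qed

lemma inner_diag:
  assumes "is_diag_pos D" shows "x \<bullet> (D *v y) = (\<Sum>q\<in>UNIV. D $ q $ q * x $ q * y $ q)"
  by (simp add: inner_vec_def is_diag_pos_mult_vec_nth[OF assms] mult_ac)

lemma inner_diag_commute:
  assumes "is_diag_pos D" shows "x \<bullet> (D *v y) = y \<bullet> (D *v x)"
  by (simp add: inner_diag[OF assms] mult_ac)

lemma inner_diag_mono:
  assumes "is_diag_pos D" and "\<And>q. x $ q * y $ q \<le> u $ q * v $ q"
  shows "x \<bullet> (D *v y) \<le> u \<bullet> (D *v v)"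
  unfolding inner_diag[OF assms(1)] mult.assoc
  using assms by (intro sum_mono mult_left_mono) (auto simp: is_diag_pos_def less_imp_le)

lemma inner_diag_self_nonneg:
  assumes "is_diag_pos D" shows "0 \<le> x \<bullet> (D *v x)"
  using inner_diag_mono[OF assms, of 0 0 x x] by simp

lemma inner_diag_self_eq_0_iff:
  assumes "is_diag_pos D" shows "x \<bullet> (D *v x) = 0 \<longleftrightarrow> x = 0"
proof
  assume "x \<bullet> (D *v x) = 0"
  moreover have "0 \<le> D $ q $ q * x $ q * x $ q" for q
    using assms by (simp add: is_diag_pos_def less_imp_le mult.assoc)
  ultimately have "\<forall>q\<in>UNIV. D $ q $ q * x $ q * x $ q = 0"
    by (simp add: inner_diag[OF assms] sum_nonneg_eq_0_iff)
  then have "x $ q = 0" for q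
    using assms unfolding is_diag_pos_def by (metis UNIV_I mult_eq_0_iff less_irrefl)
  then show "x = 0" by (simp add: vec_eq_iff)
qed simp

lemma inner_diag_self_le:
  assumes "is_diag_pos D" and "\<And>q. \<bar>x $ q\<bar> \<le> B"
  shows "x \<bullet> (D *v x) \<le> B\<^sup>2 * trace D"
proof -
  have "x \<bullet> (D *v x) \<le> (\<chi> q. B) \<bullet> (D *v (\<chi> q. B))"
  proof (rule inner_diag_mono[OF assms(1)])
    fix q
    have "x $ q * x $ q \<le> B * B"
      using assms(2)[of q] abs_le_square_iff[of "x $ q" B] by (simp add: power2_eq_square)
    then show "x $ q * x $ q \<le> (\<chi> q. B) $ q * (\<chi> q. B) $ q" by simp
  qed
  then show ?thesis by (simp add: inner_diag[OF assms(1)] trace_def sum_distrib_left power2_eq_square mult_ac)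
qed

lemma inner_diag_tendsto_zero:
  fixes f :: "nat \<Rightarrow> real^'q"
  assumes "is_diag_pos D" and "(\<lambda>t. f t \<bullet> (D *v f t)) \<longlonglongrightarrow> 0"
  shows "f \<longlonglongrightarrow> 0"
proof (rule vec_tendstoI)
  fix q
  have dq: "0 < D $ q $ q" using assms(1) by (simp add: is_diag_pos_def)
  have "D $ q $ q * (f t $ q)\<^sup>2 \<le> f t \<bullet> (D *v f t)" for t
  proof -
    have "D $ q $ q * (f t $ q)\<^sup>2 \<le> (\<Sum>p\<in>UNIV. D $ p $ p * (f t $ p)\<^sup>2)"
      using assms(1) by (intro member_le_sum) (auto simp: is_diag_pos_def less_imp_le)
    then show ?thesis by (simp add: inner_diag[OF assms(1)] power2_eq_square mult_ac)
  qed
  then have bound: "norm ((f t $ q)\<^sup>2) \<le> f t \<bullet> (D *v f t) / D $ q $ q" for t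
    using dq by (simp add: le_divide_eq mult.commute)
  have "(\<lambda>t. f t \<bullet> (D *v f t) / D $ q $ q) \<longlonglongrightarrow> 0"
    using tendsto_divide_zero[OF assms(2)] by simp
  then have "(\<lambda>t. (f t $ q)\<^sup>2) \<longlonglongrightarrow> 0"
    by (rule Lim_null_comparison[OF always_eventually[OF allI[OF bound]]])
  then have "(\<lambda>t. sqrt ((f t $ q)\<^sup>2)) \<longlonglongrightarrow> 0"
    using tendsto_real_sqrt by fastforce
  then show "(\<lambda>t. f t $ q) \<longlonglongrightarrow> 0 $ q"
    by (simp add: tendsto_rabs_zero_iff)
qed

lemma inner_diag_cong:
  assumes "is_diag_pos D" and "\<And>q. x $ q * y $ q = u $ q * v $ q"
  shows "x \<bullet> (D *v y) = u \<bullet> (D *v v)"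
  using inner_diag_mono[OF assms(1)] assms(2) by (simp add: order_antisym)

lemma inner_diag_diff_self:
  assumes "is_diag_pos D"
  shows "(y - z) \<bullet> (D *v (y - z)) = y \<bullet> (D *v y) - 2 * (z \<bullet> (D *v y)) + z \<bullet> (D *v z)"
  using inner_diag_commute[OF assms, of y z]
  by (simp add: matrix_vector_mult_diff_distrib inner_diff_left inner_diff_right)

lemma inner_matrix_vector_sum_scaleR:
  fixes D :: "real^'n^'m" and SS :: "(real^'n) set"
  shows "x \<bullet> (D *v (\<Sum>P\<in>SS. \<alpha> P *\<^sub>R P)) = (\<Sum>P\<in>SS. \<alpha> P * (x \<bullet> (D *v P)))"
  by (simp add: vec.sum inner_sum_right matrix_vector_mult_scaleR)

lemma pos_part_nth: "pos_part x $ q = max 0 (x $ q)"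
  by (simp add: pos_part_def)

lemma pos_part_mult_self: "pos_part x $ q * pos_part x $ q = pos_part x $ q * x $ q"
  by (simp add: pos_part_nth max_def)

lemma sum_weights_le:
  fixes \<alpha> f :: "'a \<Rightarrow> real"
  assumes "\<forall>P\<in>SS. 0 \<le> \<alpha> P" and "sum \<alpha> SS \<le> 1" and "0 \<le> m" and "\<forall>P\<in>SS. f P \<le> m"
  shows "(\<Sum>P\<in>SS. \<alpha> P * f P) \<le> m"
proof -
  have "(\<Sum>P\<in>SS. \<alpha> P * f P) \<le> (\<Sum>P\<in>SS. \<alpha> P * m)"
    using assms by (intro sum_mono mult_left_mono) auto
  also have "\<dots> = sum \<alpha> SS * m" by (simp add: sum_distrib_right)
  also have "\<dots> \<le> m" using mult_right_mono[OF assms(2,3)] by simp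
  finally show ?thesis .
qed

lemma convex_comb_support_eq_max:
  fixes \<alpha> f :: "'a \<Rightarrow> real"
  assumes "finite SS" and "\<forall>P\<in>SS. 0 \<le> \<alpha> P" and "sum \<alpha> SS = 1"
    and "\<forall>P\<in>SS. f P \<le> (\<Sum>P\<in>SS. \<alpha> P * f P)" and "P \<in> SS" and "0 < \<alpha> P"
  shows "f P = (\<Sum>P\<in>SS. \<alpha> P * f P)"
proof -
  define c where "c = (\<Sum>P\<in>SS. \<alpha> P * f P)"
  have "(\<Sum>P\<in>SS. \<alpha> P * (c - f P)) = c - c"
    using assms(3) by (simp add: c_def sum_subtractf algebra_simps flip: sum_distrib_right)
  moreover have "\<forall>P\<in>SS. 0 \<le> \<alpha> P * (c - f P)"
    using assms(2,4) by (simp add: c_def)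
  ultimately have "\<forall>P\<in>SS. \<alpha> P * (c - f P) = 0"
    using sum_nonneg_eq_0_iff[OF assms(1), of "\<lambda>P. \<alpha> P * (c - f P)"] by simp
  then show ?thesis using assms(5,6) by (fastforce simp: c_def)
qed

lemma le_convex_comb_of_le_support:
  fixes \<alpha> f :: "'a \<Rightarrow> real"
  assumes "\<forall>P\<in>SS. 0 \<le> \<alpha> P" and "sum \<alpha> SS = 1"
    and "\<forall>P'\<in>SS. 0 < \<alpha> P' \<longrightarrow> f P \<le> f P'"
  shows "f P \<le> (\<Sum>P'\<in>SS. \<alpha> P' * f P')"
proof -
  have "f P = (\<Sum>P'\<in>SS. \<alpha> P' * f P)" using assms(2) by (simp flip: sum_distrib_right)
  also have "\<dots> \<le> (\<Sum>P'\<in>SS. \<alpha> P' * f P')"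
  proof (rule sum_mono)
    fix P' assume "P' \<in> SS"
    then show "\<alpha> P' * f P \<le> \<alpha> P' * f P'"
      using assms(1,3) by (cases "\<alpha> P' = 0") (auto intro: mult_left_mono)
  qed
  finally show ?thesis .
qed

lemma square_max_0_diff_le: "(max 0 (x - h))\<^sup>2 \<le> (max 0 x - h)\<^sup>2" for x h :: real
proof (cases "x - h \<le> 0 \<or> 0 \<le> x")
  case False
  then have "0 \<le> x - h" "x - h \<le> - h" by auto
  then have "(x - h)\<^sup>2 \<le> (- h)\<^sup>2" by (intro power_mono)
  then show ?thesis using False by simp
qed (auto simp: max_def)

lemma nonpos_of_le_all_small_multiples:
  fixes a W :: real
  assumes "\<And>l. 0 < l \<Longrightarrow> l \<le> 1 \<Longrightarrow> a \<le> l * W"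
  shows "a \<le> 0"
proof (rule ccontr)
  assume "\<not> a \<le> 0"
  define l where "l = min 1 (a / (\<bar>W\<bar> + 1))"
  have l: "0 < l" "l \<le> 1" using \<open>\<not> a \<le> 0\<close> by (auto simp: l_def)
  have "l * W \<le> l * \<bar>W\<bar>" using l by (simp add: mult_left_mono)
  also have "\<dots> \<le> a / (\<bar>W\<bar> + 1) * \<bar>W\<bar>" by (rule mult_right_mono) (auto simp: l_def)
  also have "\<dots> < a" using \<open>\<not> a \<le> 0\<close> by (simp add: field_simps)
  finally show False using assms[OF l] by simp
qed

lemma exists_pos_part_variational_point:
  fixes H :: "(real^'q) set" and D :: "real^'q^'q"
  assumes "compact H" and "convex H" and "H \<noteq> {}" and diag: "is_diag_pos D"
  obtains r where "r \<in> H"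
    and "\<And>P. P \<in> H \<Longrightarrow> pos_part (rho - r) \<bullet> (D *v P) \<le> pos_part (rho - r) \<bullet> (D *v r)"
proof -
  define g where "g r = pos_part (rho - r) \<bullet> (D *v pos_part (rho - r))" for r
  have "continuous_on H g"
    unfolding g_def inner_diag[OF diag] pos_part_nth by (intro continuous_intros)
  then obtain r where r: "r \<in> H" and min: "\<And>y. y \<in> H \<Longrightarrow> g r \<le> g y"
    using continuous_attains_inf[OF assms(1,3)] by blast
  define e where "e = pos_part (rho - r)"
  have "e \<bullet> (D *v (P - r)) \<le> 0" if P: "P \<in> H" for P
  proof (rule nonpos_of_le_all_small_multiples)
    define a where "a = e \<bullet> (D *v (P - r))"
    define W where "W = (P - r) \<bullet> (D *v (P - r))"
    fix l :: real assume l: "0 < l" "l \<le> 1"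
    define v where "v = l *\<^sub>R (P - r)"
    have "r + v = (1 - l) *\<^sub>R r + l *\<^sub>R P" by (simp add: v_def algebra_simps)
    then have "r + v \<in> H" using convexD[OF assms(2) r P, of "1 - l" l] l by simp
    then have "g r \<le> g (r + v)" by (rule min)
    also have "\<dots> \<le> (e - v) \<bullet> (D *v (e - v))"
      unfolding g_def
    proof (rule inner_diag_mono[OF diag])
      fix q
      have "(max 0 (rho $ q - r $ q - v $ q))\<^sup>2 \<le> (max 0 (rho $ q - r $ q) - v $ q)\<^sup>2"
        by (rule square_max_0_diff_le)
      then show "pos_part (rho - (r + v)) $ q * pos_part (rho - (r + v)) $ q \<le> (e - v) $ q * (e - v) $ q"
        by (simp add: e_def pos_part_nth power2_eq_square diff_diff_eq)
    qed
    also have "\<dots> = g r - 2 * l * a + l * (l * W)"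
      unfolding a_def W_def v_def g_def e_def[symmetric]
      by (simp add: inner_diag_diff_self[OF diag] matrix_vector_mult_scaleR
          inner_diag_commute[OF diag, of "P - r" e])
    finally have "l * (2 * a) \<le> l * (l * W / 2 * 2)" by simp
    then show "a \<le> l * (W / 2)" using l by simp
  qed
  then show thesis
    using r by (intro that) (auto simp: e_def matrix_vector_mult_diff_distrib inner_diff_right)
qed

definition kkt_point :: "(real^'q) set \<Rightarrow> real^'q^'q \<Rightarrow> real^'q \<Rightarrow> real^'q \<Rightarrow> bool" where
  "kkt_point SS D rho z \<longleftrightarrow> (\<exists>\<alpha>. (\<forall>S\<in>SS. 0 \<le> \<alpha> S) \<and> (\<Sum>S\<in>SS. \<alpha> S) = 1
     \<and> z = pos_part (rho - (\<Sum>S\<in>SS. \<alpha> S *\<^sub>R S))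
     \<and> (\<forall>Sm\<in>SS. 0 < \<alpha> Sm \<longrightarrow> (\<forall>Sk\<in>SS. z \<bullet> (D *v Sk) \<le> z \<bullet> (D *v Sm))))"

lemma kkt_point_iff_variational:
  fixes SS :: "(real^'q) set" and D :: "real^'q^'q"
  assumes "finite SS"
  shows "kkt_point SS D rho z \<longleftrightarrow> (\<exists>\<alpha>. (\<forall>S\<in>SS. 0 \<le> \<alpha> S) \<and> sum \<alpha> SS = 1
     \<and> z = pos_part (rho - (\<Sum>S\<in>SS. \<alpha> S *\<^sub>R S))
     \<and> (\<forall>P\<in>SS. z \<bullet> (D *v P) \<le> z \<bullet> (D *v (\<Sum>S\<in>SS. \<alpha> S *\<^sub>R S))))"
  unfolding kkt_point_def inner_matrix_vector_sum_scaleR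
proof (intro ex_cong1 conj_cong refl)
  fix \<alpha> :: "real^'q \<Rightarrow> real"
  assume a0: "\<forall>S\<in>SS. 0 \<le> \<alpha> S" and a1: "sum \<alpha> SS = 1"
  define f where "f P = z \<bullet> (D *v P)" for P
  show "(\<forall>Sm\<in>SS. 0 < \<alpha> Sm \<longrightarrow> (\<forall>Sk\<in>SS. z \<bullet> (D *v Sk) \<le> z \<bullet> (D *v Sm)))
      \<longleftrightarrow> (\<forall>P\<in>SS. z \<bullet> (D *v P) \<le> (\<Sum>S\<in>SS. \<alpha> S * (z \<bullet> (D *v S))))"
    unfolding f_def[symmetric]
  proof
    assume "\<forall>Sm\<in>SS. 0 < \<alpha> Sm \<longrightarrow> (\<forall>Sk\<in>SS. f Sk \<le> f Sm)"
    then show "\<forall>P\<in>SS. f P \<le> (\<Sum>S\<in>SS. \<alpha> S * f S)"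
      using le_convex_comb_of_le_support[OF a0 a1, of f] by blast
  next
    assume var: "\<forall>P\<in>SS. f P \<le> (\<Sum>S\<in>SS. \<alpha> S * f S)"
    show "\<forall>Sm\<in>SS. 0 < \<alpha> Sm \<longrightarrow> (\<forall>Sk\<in>SS. f Sk \<le> f Sm)"
      using convex_comb_support_eq_max[OF assms a0 a1 var] var by simp
  qed
qed

lemma kkt_point_exists:
  fixes SS :: "(real^'q) set" and D :: "real^'q^'q"
  assumes "finite SS" and "SS \<noteq> {}" and "is_diag_pos D"
  shows "\<exists>z. kkt_point SS D rho z"
proof -
  have "compact (convex hull SS)"
    using assms(1) by (intro compact_convex_hull finite_imp_compact)
  moreover have "convex hull SS \<noteq> {}" using assms(2) by simp
  ultimately obtain r where r: "r \<in> convex hull SS"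
    and var: "\<And>P. P \<in> convex hull SS \<Longrightarrow>
      pos_part (rho - r) \<bullet> (D *v P) \<le> pos_part (rho - r) \<bullet> (D *v r)"
    using exists_pos_part_variational_point[OF _ convex_convex_hull _ assms(3)] by blast
  obtain \<alpha> where a0: "\<forall>S\<in>SS. 0 \<le> \<alpha> S" and a1: "sum \<alpha> SS = 1"
    and r_eq: "(\<Sum>S\<in>SS. \<alpha> S *\<^sub>R S) = r"
    using r by (auto simp: convex_hull_finite[OF assms(1)])
  have "\<forall>P\<in>SS. pos_part (rho - r) \<bullet> (D *v P) \<le> pos_part (rho - r) \<bullet> (D *v r)"
    by (simp add: var hull_inc)
  then have "kkt_point SS D rho (pos_part (rho - r))"
    unfolding kkt_point_iff_variational[OF assms(1)] using a0 a1
    by (intro exI[of _ \<alpha>]) (simp add: r_eq)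
  then show ?thesis ..
qed

lemma kkt_point_gap:
  fixes SS :: "(real^'q) set" and D :: "real^'q^'q"
  assumes fin: "finite SS" and Snn: "\<forall>S\<in>SS. \<forall>q. 0 \<le> S $ q" and diag: "is_diag_pos D"
    and z: "kkt_point SS D rho z" and y: "y \<in> Psi rho SS"
  shows "z \<bullet> (D *v z) + (y - z) \<bullet> (D *v (y - z)) \<le> y \<bullet> (D *v y)"
proof -
  obtain \<beta> where b0: "\<forall>S\<in>SS. 0 \<le> \<beta> S" and z_eq: "z = pos_part (rho - (\<Sum>S\<in>SS. \<beta> S *\<^sub>R S))"
    and var: "\<forall>P\<in>SS. z \<bullet> (D *v P) \<le> z \<bullet> (D *v (\<Sum>S\<in>SS. \<beta> S *\<^sub>R S))"
    using z unfolding kkt_point_iff_variational[OF fin] by blast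
  obtain \<alpha> where a0: "\<forall>S\<in>SS. 0 \<le> \<alpha> S" and a1: "sum \<alpha> SS \<le> 1"
    and y_eq: "y = pos_part (rho - (\<Sum>S\<in>SS. \<alpha> S *\<^sub>R S))"
    using y unfolding Psi_def by blast
  define rb where "rb = (\<Sum>S\<in>SS. \<beta> S *\<^sub>R S)"
  define ra where "ra = (\<Sum>S\<in>SS. \<alpha> S *\<^sub>R S)"
  have z0: "0 \<le> z $ q" for q by (simp add: z_eq pos_part_nth)
  have zP: "0 \<le> z \<bullet> (D *v P)" if "P \<in> SS" for P
    using inner_diag_mono[OF diag, of 0 0 z P] z0 Snn that by simp
  have "z \<bullet> (D *v ra) = (\<Sum>S\<in>SS. \<alpha> S * (z \<bullet> (D *v S)))"
    by (simp add: ra_def inner_matrix_vector_sum_scaleR)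
  also have "\<dots> \<le> z \<bullet> (D *v rb)"
  proof (rule sum_weights_le[OF a0 a1])
    show "0 \<le> z \<bullet> (D *v rb)"
      using b0 zP by (simp add: rb_def inner_matrix_vector_sum_scaleR sum_nonneg)
  qed (use var in \<open>simp add: rb_def\<close>)
  finally have ra_rb: "z \<bullet> (D *v ra) \<le> z \<bullet> (D *v rb)" .
  have "z \<bullet> (D *v z) = z \<bullet> (D *v (rho - rb))"
    by (rule inner_diag_cong[OF diag]) (simp add: z_eq rb_def pos_part_mult_self)
  also have "\<dots> \<le> z \<bullet> (D *v (rho - ra))"
    using ra_rb
    by (simp add: matrix_vector_mult_diff_distrib inner_diff_right)
  also have "\<dots> \<le> z \<bullet> (D *v y)"
    using z0 by (intro inner_diag_mono[OF diag]) (simp add: y_eq ra_def pos_part_nth mult_left_mono)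
  finally show ?thesis by (simp add: inner_diag_diff_self[OF diag])
qed

lemma kkt_point_minimizes:
  fixes SS :: "(real^'q) set" and D :: "real^'q^'q"
  assumes "finite SS" and "\<forall>S\<in>SS. \<forall>q. 0 \<le> S $ q" and diag: "is_diag_pos D"
    and "kkt_point SS D rho z" and "y \<in> Psi rho SS"
  shows "z \<bullet> (D *v z) \<le> y \<bullet> (D *v y)"
  using kkt_point_gap[OF assms] inner_diag_self_nonneg[OF diag, of "y - z"] by linarith

lemma kkt_point_unique_minimizer:
  fixes SS :: "(real^'q) set" and D :: "real^'q^'q"
  assumes "finite SS" and "\<forall>S\<in>SS. \<forall>q. 0 \<le> S $ q" and diag: "is_diag_pos D"
    and "kkt_point SS D rho z" and "y \<in> Psi rho SS" and "y \<bullet> (D *v y) \<le> z \<bullet> (D *v z)"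
  shows "y = z"
proof -
  have "(y - z) \<bullet> (D *v (y - z)) \<le> 0"
    using kkt_point_gap[OF assms(1-5)] assms(6) by linarith
  then have "(y - z) \<bullet> (D *v (y - z)) = 0"
    using inner_diag_self_nonneg[OF diag, of "y - z"] by linarith
  then show ?thesis by (simp add: inner_diag_self_eq_0_iff[OF diag])
qed

lemma kkt_point_in_Psi: "kkt_point SS D rho z \<Longrightarrow> z \<in> Psi rho SS"
  unfolding kkt_point_def Psi_def by fastforce

lemma kkt_point_nonzero:
  assumes "kkt_point SS D rho z" and "\<forall>q. 0 \<le> rho $ q" and "rho \<notin> stab_region SS"
  shows "z \<noteq> 0"
proof
  assume "z = 0"
  obtain \<alpha> where a: "\<forall>S\<in>SS. 0 \<le> \<alpha> S" "sum \<alpha> SS = 1"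
    and z_eq: "z = pos_part (rho - (\<Sum>S\<in>SS. \<alpha> S *\<^sub>R S))"
    using assms(1) unfolding kkt_point_def by blast
  have "rho $ q \<le> (\<Sum>S\<in>SS. \<alpha> S *\<^sub>R S) $ q" for q
    using arg_cong[OF z_eq, of "\<lambda>x. x $ q"] \<open>z = 0\<close> by (simp add: pos_part_nth)
  then have "rho \<in> stab_region SS"
    unfolding stab_region_def using a assms(2) by blast
  then show False using assms(3) by contradiction
qed

lemma sum_Suc_div_square_tendsto_zero:
  fixes c :: "nat \<Rightarrow> real"
  assumes c0: "\<And>s. 0 \<le> c s" and lim: "(\<lambda>s. c s / real s) \<longlonglongrightarrow> 0"
  shows "(\<lambda>t. (\<Sum>s<t. c (Suc s)) / (real t)\<^sup>2) \<longlonglongrightarrow> 0"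
proof (rule order_tendstoI)
  fix a :: real assume "a < 0"
  moreover have "0 \<le> (\<Sum>s<t. c (Suc s)) / (real t)\<^sup>2" for t
    using c0 by (simp add: sum_nonneg)
  ultimately show "\<forall>\<^sub>F t in sequentially. a < (\<Sum>s<t. c (Suc s)) / (real t)\<^sup>2"
    by (simp add: less_le_trans)
next
  fix r :: real assume r: "0 < r"
  obtain N where N: "\<And>s. N \<le> s \<Longrightarrow> c s / real s < r / 2"
    using order_tendstoD(2)[OF lim, of "r / 2"] r unfolding eventually_sequentially by auto
  define M where "M = (\<Sum>s<N. c (Suc s))"
  have M0: "0 \<le> M" unfolding M_def using c0 by (simp add: sum_nonneg)
  have c_le: "c (Suc s) \<le> M + r / 2 * real t" if "s < t" for s t
  proof (cases "N \<le> Suc s")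
    case True
    then have "c (Suc s) < r / 2 * real (Suc s)" using N[OF True] by (simp add: field_simps)
    also have "\<dots> \<le> r / 2 * real t" using r that by simp
    finally show ?thesis using M0 by linarith
  next
    case False
    then have "c (Suc s) \<le> M" unfolding M_def using c0 by (intro member_le_sum) auto
    moreover have "0 \<le> r / 2 * real t" using r by simp
    ultimately show ?thesis by linarith
  qed
  have "\<forall>\<^sub>F t in sequentially. M / real t < r / 2 \<and> 0 < t"
    using order_tendstoD(2)[OF lim_const_over_n, of "r / 2" M] r by (simp add: eventually_conj_iff)
  then show "\<forall>\<^sub>F t in sequentially. (\<Sum>s<t. c (Suc s)) / (real t)\<^sup>2 < r"
  proof (rule eventually_mono, elim conjE)
    fix t :: nat assume small: "M / real t < r / 2" and "0 < t"
    have "(\<Sum>s<t. c (Suc s)) \<le> (\<Sum>s<t. M + r / 2 * real t)"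
      using c_le by (intro sum_mono) simp
    then have "(\<Sum>s<t. c (Suc s)) / (real t)\<^sup>2 \<le> M / real t + r / 2"
      using \<open>0 < t\<close> by (simp add: field_simps power2_eq_square)
    then show "(\<Sum>s<t. c (Suc s)) / (real t)\<^sup>2 < r" using small by linarith
  qed
qed
lemma sum_mult_div_square_tendsto_zero:
  fixes Y a :: "nat \<Rightarrow> real"
  assumes Y0: "Y 0 = 0" and Y_inc: "\<And>s. \<bar>Y (Suc s) - Y s\<bar> \<le> B"
    and a_mean: "(\<lambda>t. (\<Sum>s<t. a s) / real t) \<longlonglongrightarrow> 0"
  shows "(\<lambda>t. (\<Sum>s<t. Y s * a s) / (real t)\<^sup>2) \<longlonglongrightarrow> 0"
proof -
  define C where "C t = (\<Sum>s<t. a s)" for t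
  have by_parts: "(\<Sum>s<t. Y s * a s) = Y t * C t - (\<Sum>s<t. (Y (Suc s) - Y s) * C (Suc s))" for t
    by (induction t) (simp_all add: C_def Y0 algebra_simps)
  have Y_le: "\<bar>Y t\<bar> \<le> B * real t" for t
  proof (induction t)
    case (Suc t) then show ?case using Y_inc[of t] by (simp add: algebra_simps)
  qed (simp add: Y0)
  have bound: "\<bar>\<Sum>s<t. Y s * a s\<bar> \<le> B * real t * \<bar>C t\<bar> + B * (\<Sum>s<t. \<bar>C (Suc s)\<bar>)" for t
  proof -
    have "\<bar>\<Sum>s<t. (Y (Suc s) - Y s) * C (Suc s)\<bar> \<le> (\<Sum>s<t. \<bar>(Y (Suc s) - Y s) * C (Suc s)\<bar>)"
      by (rule sum_abs)
    also have "\<dots> \<le> B * (\<Sum>s<t. \<bar>C (Suc s)\<bar>)"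
      unfolding sum_distrib_left by (intro sum_mono) (simp add: abs_mult Y_inc mult_right_mono)
    moreover have "\<bar>Y t * C t\<bar> \<le> B * real t * \<bar>C t\<bar>" by (simp add: abs_mult Y_le mult_right_mono)
    ultimately show ?thesis unfolding by_parts by linarith
  qed
  have C_mean: "(\<lambda>t. \<bar>C t\<bar> / real t) \<longlonglongrightarrow> 0"
    using tendsto_rabs_zero[OF a_mean] by (simp add: C_def)
  have majorant: "(\<lambda>t. B * (\<bar>C t\<bar> / real t) + B * ((\<Sum>s<t. \<bar>C (Suc s)\<bar>) / (real t)\<^sup>2)) \<longlonglongrightarrow> 0"
    using C_mean sum_Suc_div_square_tendsto_zero[OF _ C_mean]
    by (intro tendsto_add_zero tendsto_mult_right_zero) simp_all
  have "norm ((\<Sum>s<t. Y s * a s) / (real t)\<^sup>2)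
      \<le> B * (\<bar>C t\<bar> / real t) + B * ((\<Sum>s<t. \<bar>C (Suc s)\<bar>) / (real t)\<^sup>2)" for t
  proof -
    have "norm ((\<Sum>s<t. Y s * a s) / (real t)\<^sup>2) = \<bar>\<Sum>s<t. Y s * a s\<bar> / (real t)\<^sup>2"
      by simp
    also have "\<dots> \<le> (B * real t * \<bar>C t\<bar> + B * (\<Sum>s<t. \<bar>C (Suc s)\<bar>)) / (real t)\<^sup>2"
      by (intro divide_right_mono bound) simp
    also have "\<dots> = B * (\<bar>C t\<bar> / real t) + B * ((\<Sum>s<t. \<bar>C (Suc s)\<bar>) / (real t)\<^sup>2)"
      by (simp add: add_divide_distrib power2_eq_square)
    finally show ?thesis .
  qed
  then show ?thesis
    by (rule Lim_null_comparison[OF always_eventually[OF allI] majorant])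
qed

lemma diff_mult_le_mult_min: "0 \<le> s \<Longrightarrow> (x - s) * s \<le> x * min s x" for x s :: real
proof (cases "s \<le> x")
  case False
  assume "0 \<le> s"
  then have "(x - s) * s \<le> 0" using False by (simp add: mult_nonpos_nonneg)
  also have "0 \<le> x * x" by simp
  also have "x * x = x * min s x" using False by simp
  finally show ?thesis .
qed (simp add: algebra_simps)

lemma workload_nth_nonneg:
  assumes "\<forall>t q. 0 \<le> A t $ q" shows "0 \<le> workload A S t $ q"
proof (induction t)
  case (Suc t)
  then show ?case using assms by (auto simp: cmin_def min_def add_increasing2)
qed simp

(* MaxWeight gives <x, Delta s> >= <x, Delta r>, and the KKT conditions give
   <eta, Delta s> <= <eta, Delta r> = <eta, Delta (rho - eta)>. *)
lemma maxweight_drift: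
  fixes SS :: "(real^'q) set" and D :: "real^'q^'q"
  assumes diag: "is_diag_pos D" and Snn: "\<forall>S\<in>SS. \<forall>q. 0 \<le> S $ q"
    and a0: "\<forall>S\<in>SS. 0 \<le> \<alpha> S" and a1: "sum \<alpha> SS = 1"
    and r: "r = (\<Sum>S\<in>SS. \<alpha> S *\<^sub>R S)" and \<eta>: "\<eta> = pos_part (rho - r)"
    and var: "\<forall>P\<in>SS. \<eta> \<bullet> (D *v P) \<le> \<eta> \<bullet> (D *v r)"
    and s: "s \<in> SS" and mw: "\<forall>P\<in>SS. P \<bullet> (D *v x) \<le> s \<bullet> (D *v x)"
    and x0: "\<forall>q. 0 \<le> x $ q" and "0 \<le> \<tau>"
  shows "(x - \<tau> *\<^sub>R \<eta>) \<bullet> (D *v (a - cmin s x - \<eta>))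
    \<le> (x - \<tau> *\<^sub>R \<eta>) \<bullet> (D *v (a - rho)) + s \<bullet> (D *v s)"
proof -
  have s0: "0 \<le> s $ q" for q using Snn s by blast
  have \<eta>0: "0 \<le> \<eta> $ q" for q by (simp add: \<eta> pos_part_nth)
  have "x \<bullet> (D *v s) - s \<bullet> (D *v s) \<le> x \<bullet> (D *v cmin s x)"
    using diff_mult_le_mult_min[OF s0] inner_diag_mono[OF diag, of "x - s" s x "cmin s x"]
    by (simp add: cmin_def inner_diff_left)
  moreover have "x \<bullet> (D *v r) \<le> x \<bullet> (D *v s)"
  proof -
    have "x \<bullet> (D *v r) = (\<Sum>P\<in>SS. \<alpha> P * (P \<bullet> (D *v x)))"
      by (simp add: r inner_matrix_vector_sum_scaleR inner_diag_commute[OF diag, of x])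
    also have "\<dots> \<le> s \<bullet> (D *v x)"
      using inner_diag_mono[OF diag, of 0 0 s x] s0 x0 mw
      by (intro sum_weights_le[OF a0 eq_refl[OF a1]]) simp_all
    finally show ?thesis by (simp add: inner_diag_commute[OF diag, of s])
  qed
  moreover have "x \<bullet> (D *v (rho - r)) \<le> x \<bullet> (D *v \<eta>)"
    using x0 by (intro inner_diag_mono[OF diag]) (simp add: \<eta> pos_part_nth mult_left_mono)
  ultimately have drift_x: "x \<bullet> (D *v (a - cmin s x - \<eta>)) \<le> x \<bullet> (D *v (a - rho)) + s \<bullet> (D *v s)"
    by (simp add: matrix_vector_mult_diff_distrib inner_diff_right)
  have "\<eta> \<bullet> (D *v cmin s x) \<le> \<eta> \<bullet> (D *v s)"
    using \<eta>0 by (intro inner_diag_mono[OF diag]) (simp add: cmin_def mult_left_mono)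
  moreover have "\<eta> \<bullet> (D *v s) \<le> \<eta> \<bullet> (D *v r)" using var s by blast
  moreover have "\<eta> \<bullet> (D *v \<eta>) = \<eta> \<bullet> (D *v (rho - r))"
    by (rule inner_diag_cong[OF diag]) (simp add: \<eta> pos_part_mult_self)
  ultimately have "\<eta> \<bullet> (D *v (a - rho)) \<le> \<eta> \<bullet> (D *v (a - cmin s x - \<eta>))"
    by (simp add: matrix_vector_mult_diff_distrib inner_diff_right)
  then have "\<tau> * (\<eta> \<bullet> (D *v (a - rho))) \<le> \<tau> * (\<eta> \<bullet> (D *v (a - cmin s x - \<eta>)))"
    using \<open>0 \<le> \<tau>\<close> by (rule mult_left_mono)
  with drift_x show ?thesis by (simp add: inner_diff_left)
qed

lemma arrival_trace_centered_tendsto_zero: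
  assumes "arrival_trace A rho"
  shows "(\<lambda>t. (\<Sum>s<t. A s $ q - rho $ q) / real t) \<longlonglongrightarrow> 0"
proof -
  have "(\<lambda>t. (\<Sum>s<t. A s $ q) / real t) \<longlonglongrightarrow> rho $ q"
    using assms unfolding arrival_trace_def by blast
  then have "(\<lambda>t. (\<Sum>s<t. A s $ q) / real t - rho $ q) \<longlonglongrightarrow> 0"
    by (simp add: LIM_zero)
  moreover have "(\<Sum>s<t. A s $ q) / real t - rho $ q = (\<Sum>s<t. A s $ q - rho $ q) / real t" if "1 \<le> t" for t
    using that by (simp add: sum_subtractf field_simps)
  ultimately show ?thesis
    by (rule Lim_transform_eventually[OF _ eventually_sequentiallyI])
qed

lemma inner_diag_sum_div_square_tendsto_zero:
  fixes Y a :: "nat \<Rightarrow> real^'q" and D :: "real^'q^'q"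
  assumes diag: "is_diag_pos D" and "Y 0 = 0" and "\<And>s q. \<bar>Y (Suc s) $ q - Y s $ q\<bar> \<le> B"
    and "\<And>q. (\<lambda>t. (\<Sum>s<t. a s $ q) / real t) \<longlonglongrightarrow> 0"
  shows "(\<lambda>t. (\<Sum>s<t. Y s \<bullet> (D *v a s)) / (real t)\<^sup>2) \<longlonglongrightarrow> 0"
proof -
  have "(\<lambda>t. \<Sum>q\<in>UNIV. D $ q $ q * ((\<Sum>s<t. Y s $ q * a s $ q) / (real t)\<^sup>2)) \<longlonglongrightarrow> 0"
    using assms by (intro tendsto_null_sum tendsto_mult_right_zero sum_mult_div_square_tendsto_zero) auto
  moreover have "(\<Sum>q\<in>UNIV. D $ q $ q * ((\<Sum>s<t. Y s $ q * a s $ q) / (real t)\<^sup>2))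
      = (\<Sum>s<t. Y s \<bullet> (D *v a s)) / (real t)\<^sup>2" for t
    by (simp add: inner_diag[OF diag] sum_divide_distrib sum_distrib_left sum.swap[of _ UNIV] mult_ac)
  ultimately show ?thesis by simp
qed

lemma inner_diag_telescoping_bound:
  fixes Y w :: "nat \<Rightarrow> real^'q" and D :: "real^'q^'q"
  assumes diag: "is_diag_pos D" and "Y 0 = 0" and Y_Suc: "\<And>t. Y (Suc t) = Y t + w t"
    and drift: "\<And>t. Y t \<bullet> (D *v w t) \<le> g t + c" and step: "\<And>t. w t \<bullet> (D *v w t) \<le> c"
  shows "Y t \<bullet> (D *v Y t) \<le> 2 * (\<Sum>s<t. g s) + 3 * c * real t"
proof (induction t)
  case (Suc t)
  have "Y (Suc t) \<bullet> (D *v Y (Suc t)) = Y t \<bullet> (D *v Y t) + 2 * (Y t \<bullet> (D *v w t)) + w t \<bullet> (D *v w t)"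
    using inner_diag_commute[OF diag, of "w t" "Y t"]
    by (simp add: Y_Suc matrix_vector_right_distrib inner_add_left inner_add_right)
  then show ?case using Suc drift[of t] step[of t] by (simp add: algebra_simps)
qed (simp add: assms(2))

lemma scaled_tendsto_zero_of_inner_diag_le:
  fixes Y :: "nat \<Rightarrow> real^'q" and D :: "real^'q^'q"
  assumes diag: "is_diag_pos D" and g_lim: "(\<lambda>t. g t / (real t)\<^sup>2) \<longlonglongrightarrow> 0"
    and bound: "\<And>t. Y t \<bullet> (D *v Y t) \<le> 2 * g t + C * real t"
  shows "(\<lambda>t. (1 / real t) *\<^sub>R Y t) \<longlonglongrightarrow> 0"
proof (rule inner_diag_tendsto_zero[OF diag])
  have majorant: "(\<lambda>t. 2 * (g t / (real t)\<^sup>2) + C * (1 / real t)) \<longlonglongrightarrow> 0"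
    using g_lim by (intro tendsto_add_zero tendsto_mult_right_zero lim_1_over_n)
  have "norm ((1 / real t) *\<^sub>R Y t \<bullet> (D *v ((1 / real t) *\<^sub>R Y t)))
      \<le> 2 * (g t / (real t)\<^sup>2) + C * (1 / real t)" for t
  proof -
    have "norm ((1 / real t) *\<^sub>R Y t \<bullet> (D *v ((1 / real t) *\<^sub>R Y t)))
        = (1 / real t) *\<^sub>R Y t \<bullet> (D *v ((1 / real t) *\<^sub>R Y t))"
      unfolding real_norm_def by (rule abs_of_nonneg[OF inner_diag_self_nonneg[OF diag]])
    also have "\<dots> = Y t \<bullet> (D *v Y t) / (real t)\<^sup>2"
      by (simp add: matrix_vector_mult_scaleR power2_eq_square)
    also have "\<dots> \<le> (2 * g t + C * real t) / (real t)\<^sup>2"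
      using bound by (rule divide_right_mono) simp
    also have "\<dots> = 2 * (g t / (real t)\<^sup>2) + C * (1 / real t)"
      by (simp add: add_divide_distrib power2_eq_square)
    finally show ?thesis .
  qed
  then show "(\<lambda>t. (1 / real t) *\<^sub>R Y t \<bullet> (D *v ((1 / real t) *\<^sub>R Y t))) \<longlonglongrightarrow> 0"
    by (rule Lim_null_comparison[OF always_eventually[OF allI] majorant])
qed

lemma maxweight_increments_bounded:
  fixes SS :: "(real^'q) set"
  assumes "finite SS" and "\<forall>S\<in>SS. \<forall>q. 0 \<le> S $ q"
    and "arrival_trace A rho" and "maxweight SS D A S"
  obtains B where "\<And>t q. \<bar>S t $ q\<bar> \<le> B"
    and "\<And>t q. \<bar>A t $ q - cmin (S t) (workload A S t) $ q\<bar> \<le> B"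
proof -
  obtain Abar where Ab: "\<And>t q. 0 \<le> A t $ q \<and> A t $ q \<le> Abar $ q"
    using assms(3) unfolding arrival_trace_def by blast
  obtain K where K: "\<And>P. P \<in> SS \<Longrightarrow> norm P \<le> K"
    using finite_imp_bounded[OF assms(1)] unfolding bounded_iff by blast
  have St: "S t \<in> SS" for t using assms(4) by (simp add: maxweight_def)
  have S_le: "\<bar>S t $ q\<bar> \<le> K" for t q
    using component_le_norm_cart[of "S t" q] K[OF St[of t]] by linarith
  show thesis
  proof (rule that)
    show "\<bar>S t $ q\<bar> \<le> norm Abar + K" for t q
      using S_le[of t q] norm_ge_zero[of Abar] by linarith
    fix t q
    have "0 \<le> workload A S t $ q"
      using Ab by (intro workload_nth_nonneg) blast
    then have "0 \<le> cmin (S t) (workload A S t) $ q" "cmin (S t) (workload A S t) $ q \<le> K"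
      using S_le[of t q] assms(2) St[of t] by (auto simp: cmin_def)
    moreover have "0 \<le> A t $ q" "A t $ q \<le> norm Abar"
      using Ab[of t q] component_le_norm_cart[of Abar q] by auto
    ultimately show "\<bar>A t $ q - cmin (S t) (workload A S t) $ q\<bar> \<le> norm Abar + K"
      by linarith
  qed
qed

lemma workload_tendsto_kkt_point:
  fixes SS :: "(real^'q) set" and D :: "real^'q^'q"
  assumes fin: "finite SS" and Snn: "\<forall>S\<in>SS. \<forall>q. 0 \<le> S $ q" and diag: "is_diag_pos D"
    and kkt: "kkt_point SS D rho \<eta>" and arr: "arrival_trace A rho" and mw: "maxweight SS D A S"
  shows "(\<lambda>t. (1 / real t) *\<^sub>R workload A S t) \<longlonglongrightarrow> \<eta>"
proof -
  obtain \<alpha> where a0: "\<forall>S\<in>SS. 0 \<le> \<alpha> S" and a1: "sum \<alpha> SS = 1"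
    and \<eta>_eq: "\<eta> = pos_part (rho - (\<Sum>S\<in>SS. \<alpha> S *\<^sub>R S))"
    and var: "\<forall>P\<in>SS. \<eta> \<bullet> (D *v P) \<le> \<eta> \<bullet> (D *v (\<Sum>S\<in>SS. \<alpha> S *\<^sub>R S))"
    using kkt unfolding kkt_point_iff_variational[OF fin] by blast
  obtain B where S_le: "\<And>t q. \<bar>S t $ q\<bar> \<le> B"
    and inc_le: "\<And>t q. \<bar>A t $ q - cmin (S t) (workload A S t) $ q\<bar> \<le> B"
    using maxweight_increments_bounded[OF fin Snn arr mw] by blast
  define X where "X t = workload A S t" for t
  define Y where "Y t = X t - real t *\<^sub>R \<eta>" for t
  define w where "w t = A t - cmin (S t) (X t) - \<eta>" for t
  define c where "c = (B + norm \<eta>)\<^sup>2 * trace D"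
  have Y_Suc: "Y (Suc t) = Y t + w t" for t
    by (simp add: Y_def w_def X_def cmin_def algebra_simps)
  have w_le: "\<bar>w t $ q\<bar> \<le> B + norm \<eta>" for t q
    using inc_le[of t q] component_le_norm_cart[of \<eta> q] by (simp add: w_def X_def)
  have "Y t \<bullet> (D *v w t) \<le> Y t \<bullet> (D *v (A t - rho)) + c" for t
  proof -
    have "0 \<le> X t $ q" for q
      using arr unfolding X_def arrival_trace_def by (intro workload_nth_nonneg) blast
    then have "Y t \<bullet> (D *v w t) \<le> Y t \<bullet> (D *v (A t - rho)) + S t \<bullet> (D *v S t)"
      unfolding Y_def w_def using mw
      by (intro maxweight_drift[OF diag Snn a0 a1 refl \<eta>_eq var]) (auto simp: maxweight_def X_def)
    moreover have "S t \<bullet> (D *v S t) \<le> c"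
      unfolding c_def using S_le norm_ge_zero[of \<eta>]
      by (intro inner_diag_self_le[OF diag]) (meson add_increasing2)
    ultimately show ?thesis by linarith
  qed
  moreover have "w t \<bullet> (D *v w t) \<le> c" for t
    unfolding c_def using w_le by (rule inner_diag_self_le[OF diag])
  ultimately have "Y t \<bullet> (D *v Y t) \<le> 2 * (\<Sum>s<t. Y s \<bullet> (D *v (A s - rho))) + 3 * c * real t" for t
    using Y_Suc by (intro inner_diag_telescoping_bound[OF diag, of Y w]) (simp_all add: Y_def X_def)
  moreover have "(\<lambda>t. (\<Sum>s<t. Y s \<bullet> (D *v (A s - rho))) / (real t)\<^sup>2) \<longlonglongrightarrow> 0"
  proof (rule inner_diag_sum_div_square_tendsto_zero[OF diag])
    show "\<bar>Y (Suc s) $ q - Y s $ q\<bar> \<le> B + norm \<eta>" for s q using w_le by (simp add: Y_Suc)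
  qed (simp_all add: Y_def X_def arrival_trace_centered_tendsto_zero[OF arr])
  ultimately have "(\<lambda>t. (1 / real t) *\<^sub>R Y t) \<longlonglongrightarrow> 0"
    by (intro scaled_tendsto_zero_of_inner_diag_le[OF diag])
  then have "(\<lambda>t. (1 / real t) *\<^sub>R Y t + \<eta>) \<longlonglongrightarrow> \<eta>"
    using tendsto_add[OF _ tendsto_const, of _ 0 sequentially \<eta>] by simp
  moreover have "\<forall>\<^sub>F t in sequentially. (1 / real t) *\<^sub>R Y t + \<eta> = (1 / real t) *\<^sub>R workload A S t"
    by (rule eventually_sequentiallyI[of 1]) (simp add: Y_def X_def algebra_simps)
  ultimately show ?thesis by (rule Lim_transform_eventually)
qed

theorem theorem1:
  fixes SS :: "(real^'q) set" and D :: "real^'q^'q" and rho :: "real^'q"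
  assumes "finite SS" and "SS \<noteq> {}"
    and "\<forall>S\<in>SS. \<forall>q. 0 \<le> S $ q"
    and "is_diag_pos D"
    and "\<forall>q. 0 < rho $ q"
    and "rho \<notin> stab_region SS"
  shows "\<exists>\<eta>. \<eta> \<noteq> 0
    \<and> (\<forall>A S. arrival_trace A rho \<and> maxweight SS D A S \<longrightarrow>
           (\<lambda>t. (1 / real t) *\<^sub>R workload A S t) \<longlonglongrightarrow> \<eta>)
    \<and> (\<eta> \<in> Psi rho SS \<and> (\<forall>\<eta>'\<in>Psi rho SS. \<eta> \<bullet> (D *v \<eta>) \<le> \<eta>' \<bullet> (D *v \<eta>')))
    \<and> (\<forall>\<zeta>. \<zeta> \<in> Psi rho SS \<and> (\<forall>\<eta>'\<in>Psi rho SS. \<zeta> \<bullet> (D *v \<zeta>) \<le> \<eta>' \<bullet> (D *v \<eta>'))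
            \<longrightarrow> \<zeta> = \<eta>)
    \<and> (\<forall>\<zeta>. (\<exists>\<alpha>. (\<forall>S\<in>SS. 0 \<le> \<alpha> S) \<and> (\<Sum>S\<in>SS. \<alpha> S) = 1
              \<and> \<zeta> = pos_part (rho - (\<Sum>S\<in>SS. \<alpha> S *\<^sub>R S))
              \<and> (\<forall>Sm\<in>SS. 0 < \<alpha> Sm \<longrightarrow> (\<forall>Sk\<in>SS. \<zeta> \<bullet> (D *v Sk) \<le> \<zeta> \<bullet> (D *v Sm))))
          \<longleftrightarrow> \<zeta> = \<eta>)"
proof -
  note hyps = assms(1,3,4)
  obtain \<eta> where kkt: "kkt_point SS D rho \<eta>"
    using kkt_point_exists[OF assms(1,2,4)] by blast
  have minimizer_eq: "\<zeta> = \<eta>"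
    if "\<zeta> \<in> Psi rho SS" and "\<forall>\<eta>'\<in>Psi rho SS. \<zeta> \<bullet> (D *v \<zeta>) \<le> \<eta>' \<bullet> (D *v \<eta>')" for \<zeta>
    using that kkt_point_in_Psi[OF kkt] by (intro kkt_point_unique_minimizer[OF hyps kkt]) auto
  have "kkt_point SS D rho \<zeta> \<longleftrightarrow> \<zeta> = \<eta>" for \<zeta>
    using minimizer_eq kkt_point_in_Psi kkt_point_minimizes[OF hyps] kkt by blast
  moreover have "\<eta> \<noteq> 0"
    using assms(5,6) by (intro kkt_point_nonzero[OF kkt]) (auto simp: less_imp_le)
  ultimately show ?thesis
    unfolding kkt_point_def[symmetric]
    using workload_tendsto_kkt_point[OF hyps kkt] kkt_point_in_Psi[OF kkt]
      kkt_point_minimizes[OF hyps kkt] minimizer_eq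
    by blast
qed

end
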